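(* Let $A,B$ be finite-dimensional quantum systems with $\dim\mathcal H_A,\dim\mathcal H_B\ge 2$, and let $\rho_A,\rho_B$ be density matrices on $A$ and $B$ respectively. Let $\mathcal S_{AB}$ be the set of separable density matrices on $\mathcal H_A\otimes\mathcal H_B$, and let $\partial\mathcal S_{AB}$ denote its boundary (relative to the real affine space of trace-one Hermitian operators on $\mathcal H_A\otimes\mathcal H_B$). Then $$\rho_A\otimes\rho_B\in\partial\mathcal S_{AB}\iff \det\rho_A\,\det\rho_B=0 .$$
   Context: A density matrix is a positive semidefinite operator of unit trace. A bipartite state is separable if it is a convex combination of product states $\sigma_A\otimes\sigma_B$. A point of a set $S$ is internal if some ball of nonzero radius centred at it (within the ambient affine space) is contained in $S$; the boundary $\partial S$ is the set of non-internal points of $S$. *)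

theory Defs
  imports "HOL-Analysis.Analysis"
begin

text \<open>Operators on the Hilbert space C^'n are matrices complex^'n^'n,
  with M $ i $ j the (i,j) entry. The bipartite space H_A (x) H_B is indexed
  by the product type 'a \<times> 'b.\<close>

type_synonym 'n cmat = "complex ^ 'n ^ 'n"

definition hermitian :: "'n::finite cmat \<Rightarrow> bool" where
  "hermitian M \<longleftrightarrow> (\<forall>i j. M $ i $ j = cnj (M $ j $ i))"

definition mtrace :: "'n::finite cmat \<Rightarrow> complex" where
  "mtrace M = (\<Sum>i\<in>UNIV. M $ i $ i)"

definition quad_form :: "'n::finite cmat \<Rightarrow> complex ^ 'n \<Rightarrow> complex" where
  "quad_form M v = (\<Sum>i\<in>UNIV. \<Sum>j\<in>UNIV. cnj (v $ i) * M $ i $ j * v $ j)"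

definition psd :: "'n::finite cmat \<Rightarrow> bool" where
  "psd M \<longleftrightarrow> hermitian M \<and> (\<forall>v. quad_form M v \<in> \<real> \<and> 0 \<le> Re (quad_form M v))"

definition density :: "'n::finite cmat \<Rightarrow> bool" where
  "density M \<longleftrightarrow> psd M \<and> mtrace M = 1"

definition kron :: "'a::finite cmat \<Rightarrow> 'b::finite cmat \<Rightarrow> ('a \<times> 'b) cmat" where
  "kron A B = (\<chi> p q. A $ fst p $ fst q * B $ snd p $ snd q)"

definition separable_states :: "(('a::finite) \<times> ('b::finite)) cmat set" where
  "separable_states = convex hull {kron sA sB | sA sB. density sA \<and> density sB}"

definition trace_one_herm :: "'n::finite cmat set" where
  "trace_one_herm = {X. hermitian X \<and> mtrace X = 1}"

definition internal_point :: "'n::finite cmat set \<Rightarrow> 'n cmat \<Rightarrow> bool" where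
  "internal_point S x \<longleftrightarrow> (\<exists>e>0. ball x e \<inter> trace_one_herm \<subseteq> S)"

definition aff_boundary :: "'n::finite cmat set \<Rightarrow> 'n cmat set" where
  "aff_boundary S = {x \<in> S. \<not> internal_point S x}"

end

theory Submission
  imports Defs
begin

text \<open>
  If \<open>rhoA\<close> (say) has a kernel vector \<open>v\<close>, then \<open>u = v \<otimes> e\<close> is a product vector with
  \<open>\<langle>u, (rhoA \<otimes> rhoB) u\<rangle> = 0\<close>, while \<open>\<langle>u, X u\<rangle> \<ge> 0\<close> for every separable \<open>X\<close>. Any step from
  \<open>rhoA \<otimes> rhoB\<close> in the traceless Hermitian direction \<open>|u|\<^sup>2 I - N |u\<rangle>\<langle>u|\<close> makes this
  quadratic form negative, so the product state is not internal.

  If both factors are nonsingular, they are positive definite with some margin. Every Hermitian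
  perturbation \<open>D\<close> is a real combination, with coefficients of size \<open>O(\<parallel>D\<parallel>)\<close>, of products
  \<open>h \<otimes> k\<close> of Hermitian matrices, and
  \<open>rhoA \<otimes> rhoB + c h \<otimes> k = \<onehalf>(rhoA + a h) \<otimes> (rhoB + (c/a) k) + \<onehalf>(rhoA - a h) \<otimes> (rhoB - (c/a) k)\<close>
  is a sum of products of positive matrices when \<open>c\<close> is small. Hence \<open>rhoA \<otimes> rhoB + D\<close> lies
  in the cone over the separable states, and it is separable as soon as its trace is one.
\<close>

lemma scaleR_cmat_nth: "(r *\<^sub>R M) $ i $ j = of_real r * (M $ i $ j :: complex)"
  by (metis vector_scaleR_component scaleR_conv_of_real)

lemma scaleR_cvec_nth: "(r *\<^sub>R v) $ i = of_real r * (v $ i :: complex)"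
  by (metis vector_scaleR_component scaleR_conv_of_real)

lemma cmod_nth_nth_le_norm: "cmod (M $ i $ j) \<le> norm (M :: 'n::finite cmat)"
  by (rule order_trans[OF Finite_Cartesian_Product.norm_nth_le Finite_Cartesian_Product.norm_nth_le])

lemma sum_cnj_mult_self: "(\<Sum>i\<in>UNIV. cnj (v $ i) * v $ i) = of_real ((norm (v :: complex ^ 'n::finite))\<^sup>2)"
proof -
  have "cnj (v $ i) * v $ i = of_real ((cmod (v $ i))\<^sup>2)" for i
    by (metis complex_norm_square mult.commute of_real_power)
  then show ?thesis
    by (simp add: norm_vec_def L2_set_def sum_nonneg of_real_sum)
qed

lemma quad_form_add: "quad_form (M + N) v = quad_form M v + quad_form N v"
  by (simp add: quad_form_def distrib_left distrib_right sum.distrib)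

lemma quad_form_scaleR: "quad_form (r *\<^sub>R M) v = of_real r * quad_form M v"
  unfolding quad_form_def scaleR_cmat_nth by (simp add: sum_distrib_left mult_ac)

lemma quad_form_scaleR_vec: "quad_form M (c *\<^sub>R v) = of_real (c\<^sup>2) * quad_form M v"
  unfolding quad_form_def scaleR_cvec_nth by (simp add: sum_distrib_left power2_eq_square mult_ac)

lemma quad_form_eq_sum_mult_vec: "quad_form M v = (\<Sum>i\<in>UNIV. cnj (v $ i) * (M *v v) $ i)"
  by (simp add: quad_form_def matrix_vector_mult_def sum_distrib_left mult.assoc)

lemma mtrace_add: "mtrace (M + N) = mtrace M + mtrace N"
  by (simp add: mtrace_def sum.distrib)

lemma mtrace_scaleR: "mtrace (r *\<^sub>R M) = of_real r * mtrace M"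
  unfolding mtrace_def scaleR_cmat_nth by (simp add: sum_distrib_left)

lemma hermitianD: "hermitian M \<Longrightarrow> M $ i $ j = cnj (M $ j $ i)"
  unfolding hermitian_def by blast

lemma hermitian_add: "hermitian M \<Longrightarrow> hermitian N \<Longrightarrow> hermitian (M + N)"
  unfolding hermitian_def vector_add_component complex_cnj_add by (metis hermitianD)

lemma hermitian_diff: "hermitian M \<Longrightarrow> hermitian N \<Longrightarrow> hermitian (M - N)"
  unfolding hermitian_def vector_minus_component complex_cnj_diff by (metis hermitianD)

lemma hermitian_scaleR: "hermitian M \<Longrightarrow> hermitian (r *\<^sub>R M)"
  unfolding hermitian_def scaleR_cmat_nth complex_cnj_mult complex_cnj_complex_of_real
  by (metis hermitianD)

lemma hermitian_mtrace_real: "hermitian M \<Longrightarrow> mtrace M \<in> \<real>"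
  unfolding mtrace_def by (intro sum_in_Reals) (metis hermitianD Reals_cnj_iff)

definition sesq_form :: "'n::finite cmat \<Rightarrow> complex ^ 'n \<Rightarrow> complex ^ 'n \<Rightarrow> complex" where
  "sesq_form M x y = (\<Sum>i\<in>UNIV. \<Sum>j\<in>UNIV. cnj (x $ i) * M $ i $ j * y $ j)"

lemma sesq_form_hermitian: "hermitian M \<Longrightarrow> sesq_form M x y = cnj (sesq_form M y x)"
proof -
  assume "hermitian M"
  then have "cnj (sesq_form M y x) = (\<Sum>i\<in>UNIV. \<Sum>j\<in>UNIV. y $ i * M $ j $ i * cnj (x $ j))"
    unfolding sesq_form_def cnj_sum complex_cnj_mult complex_cnj_cnj
    by (intro sum.cong refl) (metis hermitianD)
  also have "\<dots> = sesq_form M x y"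
    unfolding sesq_form_def by (subst sum.swap) (simp add: mult_ac)
  finally show ?thesis by simp
qed

lemma hermitian_quad_form_real: "hermitian M \<Longrightarrow> quad_form M v \<in> \<real>"
  using sesq_form_hermitian[of M v v] Reals_cnj_iff by (force simp: quad_form_def sesq_form_def)

lemma sum_UNIV_prod: "(\<Sum>p\<in>UNIV. f p) = (\<Sum>a\<in>UNIV. \<Sum>b\<in>UNIV. f (a, b))"
  by (simp add: sum.cartesian_product flip: UNIV_Times_UNIV)

lemma kron_nth: "kron A B $ p $ q = A $ fst p $ fst q * B $ snd p $ snd q"
  by (simp add: kron_def)

lemma kron_scaleR_left: "kron (r *\<^sub>R A) B = r *\<^sub>R kron A B"
  unfolding vec_eq_iff by (simp add: kron_def scaleR_cmat_nth del: vector_scaleR_component)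

lemma kron_scaleR_right: "kron A (r *\<^sub>R B) = r *\<^sub>R kron A B"
  unfolding vec_eq_iff by (simp add: kron_def scaleR_cmat_nth del: vector_scaleR_component)

lemma mtrace_kron: "mtrace (kron A B) = mtrace A * mtrace B"
  by (simp add: mtrace_def kron_def sum_UNIV_prod sum_product)

lemma hermitian_kron: "hermitian A \<Longrightarrow> hermitian B \<Longrightarrow> hermitian (kron A B)"
  unfolding hermitian_def kron_nth complex_cnj_mult by (metis hermitianD)

lemma quad_form_add_scaleR_vec:
  "quad_form M (v + t *\<^sub>R w) =
     quad_form M v + of_real t * (sesq_form M v w + sesq_form M w v) + of_real (t\<^sup>2) * quad_form M w"
  unfolding quad_form_def sesq_form_def vector_add_component scaleR_cvec_nth
  by (simp add: algebra_simps sum.distrib sum_distrib_left power2_eq_square)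

lemma sesq_form_image: "sesq_form M (M *v v) v = of_real ((norm (M *v v))\<^sup>2)"
proof -
  have "sesq_form M (M *v v) v = (\<Sum>i\<in>UNIV. cnj ((M *v v) $ i) * (M *v v) $ i)"
    unfolding sesq_form_def
    by (intro sum.cong refl) (simp add: matrix_vector_mult_def sum_distrib_left mult.assoc)
  then show ?thesis
    by (simp add: sum_cnj_mult_self)
qed

lemma psd_quad_form_eq_0_imp_kernel:
  assumes "psd M" "quad_form M v = 0"
  shows "M *v v = 0"
proof (rule ccontr)
  assume "M *v v \<noteq> 0"
  define r where "r = (norm (M *v v))\<^sup>2"
  define Q where "Q = Re (quad_form M (M *v v))"
  \<comment> \<open>positivity forces \<open>2 t r + t\<^sup>2 Q \<ge> 0\<close> for all real \<open>t\<close>, which fails at \<open>t = - r / (Q + 1)\<close>\<close>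
  define t where "t = - r / (Q + 1)"
  have r: "r > 0" and Q: "Q \<ge> 0"
    using \<open>M *v v \<noteq> 0\<close> assms(1) by (simp_all add: r_def Q_def psd_def)
  have "t < 0"
    using r Q by (simp add: t_def)
  have "sesq_form M (M *v v) v = of_real r" "sesq_form M v (M *v v) = of_real r"
    using sesq_form_hermitian[of M v "M *v v"] assms(1)
    by (simp_all add: sesq_form_image r_def psd_def)
  then have "Re (quad_form M (v + t *\<^sub>R (M *v v))) = 2 * t * r + t\<^sup>2 * Q"
    by (simp add: quad_form_add_scaleR_vec assms(2) Q_def)
  also have "\<dots> = 2 * t * r + t * (t * Q)"
    by (simp add: power2_eq_square mult.assoc)
  also have "t * Q = - r - t"
    using Q by (simp add: t_def field_simps)
  also have "2 * t * r + t * (- r - t) = t * r - t\<^sup>2"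
    by (simp add: power2_eq_square algebra_simps)
  also have "\<dots> < 0"
    using mult_neg_pos[OF \<open>t < 0\<close> r] by (smt (verit) zero_le_power2)
  finally show False
    using assms(1) by (simp add: psd_def not_le[symmetric])
qed

definition pos_def_with :: "'n::finite cmat \<Rightarrow> real \<Rightarrow> bool" where
  "pos_def_with M l \<longleftrightarrow> hermitian M \<and> (\<forall>v. l * (norm v)\<^sup>2 \<le> Re (quad_form M v))"

lemma nonsingular_mult_vec_eq_0_iff:
  fixes M :: "'n::finite cmat"
  assumes "det M \<noteq> 0"
  shows "M *v v = 0 \<longleftrightarrow> v = 0"
  using assms invertible_det_nz[of M] invertible_left_inverse[of M] matrix_left_invertible_ker[of M]
  by auto

lemma psd_nonsingular_imp_pos_def_with:
  fixes M :: "'n::finite cmat"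
  assumes "psd M" "det M \<noteq> 0"
  obtains l where "l > 0" "pos_def_with M l"
proof -
  have pos: "Re (quad_form M v) > 0" if "v \<noteq> 0" for v
  proof -
    have "quad_form M v \<noteq> 0"
      using psd_quad_form_eq_0_imp_kernel[OF assms(1)] nonsingular_mult_vec_eq_0_iff[OF assms(2)] that
      by blast
    moreover have "quad_form M v \<in> \<real>" "0 \<le> Re (quad_form M v)"
      using assms(1) by (auto simp: psd_def)
    ultimately show ?thesis
      by (metis Reals_cases Re_complex_of_real less_eq_real_def of_real_0)
  qed
  have cont: "continuous_on (sphere 0 1) (\<lambda>v::complex ^ 'n. Re (quad_form M v))"
    unfolding quad_form_def by (intro continuous_intros)
  obtain x where x: "x \<in> sphere 0 1"
    and x_min: "\<forall>y\<in>sphere 0 1. Re (quad_form M x) \<le> Re (quad_form M y)"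
    using continuous_attains_inf[OF compact_sphere _ cont] by (auto simp: sphere_eq_empty)
  have "Re (quad_form M x) * (norm v)\<^sup>2 \<le> Re (quad_form M v)" for v
  proof (cases "v = 0")
    case False
    then have "(1 / norm v) *\<^sub>R v \<in> sphere 0 1"
      by simp
    then have "Re (quad_form M x) \<le> Re (quad_form M ((1 / norm v) *\<^sub>R v))"
      using x_min by blast
    also have "\<dots> = Re (quad_form M v) / (norm v)\<^sup>2"
      by (simp add: quad_form_scaleR_vec power_divide)
    finally have "Re (quad_form M x) \<le> Re (quad_form M v) / (norm v)\<^sup>2" .
    then show ?thesis
      using False by (simp add: field_simps)
  qed (simp add: quad_form_def)
  moreover have "Re (quad_form M x) > 0"
    using x by (intro pos) auto
  moreover have "hermitian M"
    using assms(1) by (simp add: psd_def)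
  ultimately show thesis
    using that pos_def_with_def by blast
qed

lemma pos_def_with_imp_psd:
  assumes "pos_def_with M l" "0 \<le> l"
  shows "psd M"
  unfolding psd_def
proof (intro conjI allI)
  show "hermitian M"
    using assms(1) by (simp add: pos_def_with_def)
  then show "quad_form M v \<in> \<real>" for v
    by (rule hermitian_quad_form_real)
  have "0 \<le> l * (norm v)\<^sup>2" for v :: "complex ^ 'a"
    using assms(2) by simp
  then show "0 \<le> Re (quad_form M v)" for v
    using assms(1) order_trans unfolding pos_def_with_def by blast
qed

lemma quad_form_axis: "quad_form M (axis i 1) = M $ i $ i"
  by (simp add: quad_form_def axis_def mult_delta_left mult_delta_right if_distrib[of cnj] cong: if_cong)

lemma pos_def_with_mtrace_pos:
  fixes M :: "'n::finite cmat"
  assumes "pos_def_with M l" "0 < l"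
  shows "0 < Re (mtrace M)"
proof -
  have "norm (axis i (1::complex)) = 1" for i
    by (simp add: norm_eq_1 inner_axis')
  then have "l \<le> Re (M $ i $ i)" for i
    using assms(1) unfolding pos_def_with_def by (metis quad_form_axis mult_1_right power_one)
  then have "(\<Sum>i\<in>(UNIV::'n set). l) \<le> Re (mtrace M)"
    unfolding mtrace_def Re_sum by (rule sum_mono)
  then show ?thesis
    using assms(2) by (smt (verit) sum_pos finite UNIV_not_empty)
qed

lemma quad_form_norm_le:
  "cmod (quad_form H v) \<le> (\<Sum>i\<in>UNIV. \<Sum>j\<in>UNIV. cmod (H $ i $ j)) * (norm v)\<^sup>2"
proof -
  have "cmod (quad_form H v) \<le> (\<Sum>i\<in>UNIV. \<Sum>j\<in>UNIV. cmod (cnj (v $ i) * H $ i $ j * v $ j))"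
    unfolding quad_form_def by (rule order_trans[OF norm_sum sum_mono]) (rule norm_sum)
  also have "\<dots> \<le> (\<Sum>i\<in>UNIV. \<Sum>j\<in>UNIV. cmod (H $ i $ j) * (norm v)\<^sup>2)"
  proof (intro sum_mono)
    fix i j
    have "cmod (cnj (v $ i) * H $ i $ j * v $ j) = cmod (H $ i $ j) * (cmod (v $ i) * cmod (v $ j))"
      by (simp add: norm_mult)
    also have "\<dots> \<le> cmod (H $ i $ j) * (norm v)\<^sup>2"
      unfolding power2_eq_square
      by (intro mult_left_mono mult_mono Finite_Cartesian_Product.norm_nth_le) auto
    finally show "cmod (cnj (v $ i) * H $ i $ j * v $ j) \<le> cmod (H $ i $ j) * (norm v)\<^sup>2" .
  qed
  finally show ?thesis
    by (simp add: sum_distrib_right)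
qed

lemma pos_def_with_add_scaleR:
  assumes "pos_def_with M l" "hermitian H"
    and "\<bar>a\<bar> * (\<Sum>i\<in>UNIV. \<Sum>j\<in>UNIV. cmod (H $ i $ j)) \<le> l / 2"
  shows "pos_def_with (M + a *\<^sub>R H) (l / 2)"
  unfolding pos_def_with_def
proof (intro conjI allI)
  show "hermitian (M + a *\<^sub>R H)"
    using assms(1,2) by (simp add: pos_def_with_def hermitian_add hermitian_scaleR)
  fix v
  have "\<bar>a * Re (quad_form H v)\<bar> \<le> \<bar>a\<bar> * ((\<Sum>i\<in>UNIV. \<Sum>j\<in>UNIV. cmod (H $ i $ j)) * (norm v)\<^sup>2)"
    unfolding abs_mult
    by (intro mult_left_mono order_trans[OF abs_Re_le_cmod quad_form_norm_le]) simp
  also have "\<dots> \<le> l / 2 * (norm v)\<^sup>2"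
    using mult_right_mono[OF assms(3), of "(norm v)\<^sup>2"] by (simp add: mult.assoc)
  finally have "\<bar>a * Re (quad_form H v)\<bar> \<le> l / 2 * (norm v)\<^sup>2" .
  moreover have "l * (norm v)\<^sup>2 \<le> Re (quad_form M v)"
    using assms(1) unfolding pos_def_with_def by blast
  moreover have "Re (quad_form (M + a *\<^sub>R H) v) = Re (quad_form M v) + a * Re (quad_form H v)"
    by (simp add: quad_form_add quad_form_scaleR)
  ultimately show "l / 2 * (norm v)\<^sup>2 \<le> Re (quad_form (M + a *\<^sub>R H) v)"
    by linarith
qed

definition product_states :: "('a::finite \<times> 'b::finite) cmat set" where
  "product_states = {kron sA sB | sA sB. density sA \<and> density sB}"

lemma separable_states_eq_convex_hull: "separable_states = convex hull product_states"
  by (simp add: separable_states_def product_states_def)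

lemma mtrace_separable_state:
  assumes "X \<in> separable_states"
  shows "mtrace X = 1"
proof -
  have "convex {X :: ('a \<times> 'b) cmat. mtrace X = 1}"
    by (rule convexI) (simp add: mtrace_add mtrace_scaleR flip: of_real_add)
  moreover have "product_states \<subseteq> {X. mtrace X = 1}"
    by (auto simp: product_states_def density_def mtrace_kron)
  ultimately have "separable_states \<subseteq> {X :: ('a \<times> 'b) cmat. mtrace X = 1}"
    unfolding separable_states_eq_convex_hull by (rule hull_minimal[rotated])
  with assms show ?thesis
    by blast
qed

lemma separable_if_in_cone:
  assumes "X \<in> convex_cone hull product_states" "mtrace X = 1"
  shows "X \<in> separable_states"
proof -
  have "X \<noteq> 0"
    using assms(2) by (auto simp: mtrace_def)
  then obtain c Y where "0 \<le> c" "Y \<in> separable_states" "X = c *\<^sub>R Y"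
    using assms(1) by (auto simp: convex_cone_hull_separate conic_hull_explicit separable_states_eq_convex_hull)
  moreover from this have "c = 1"
    using assms(2) by (simp add: mtrace_scaleR mtrace_separable_state)
  ultimately show ?thesis
    by simp
qed

lemma psd_scaleR: "psd M \<Longrightarrow> 0 \<le> r \<Longrightarrow> psd (r *\<^sub>R M)"
  by (simp add: psd_def hermitian_scaleR quad_form_scaleR)

lemma density_normalize:
  assumes "psd M" "0 < Re (mtrace M)"
  shows "density ((1 / Re (mtrace M)) *\<^sub>R M)"
proof -
  have "mtrace M = of_real (Re (mtrace M))"
    using assms(1) by (metis psd_def hermitian_mtrace_real of_real_Re)
  then show ?thesis
    using assms by (auto simp: density_def psd_scaleR mtrace_scaleR)
qed

lemma kron_in_cone:
  assumes "psd P" "psd Q" "0 < Re (mtrace P)" "0 < Re (mtrace Q)"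
  shows "kron P Q \<in> convex_cone hull product_states"
proof -
  define a b where "a = Re (mtrace P)" and "b = Re (mtrace Q)"
  have "density ((1 / a) *\<^sub>R P)" "density ((1 / b) *\<^sub>R Q)"
    using density_normalize assms unfolding a_def b_def by blast+
  then have "kron ((1 / a) *\<^sub>R P) ((1 / b) *\<^sub>R Q) \<in> product_states"
    unfolding product_states_def by blast
  then have "(a * b) *\<^sub>R kron ((1 / a) *\<^sub>R P) ((1 / b) *\<^sub>R Q) \<in> convex_cone hull product_states"
    using assms(3,4) by (intro convex_cone_hull_mul hull_inc) (simp_all add: a_def b_def)
  then show ?thesis
    using assms(3,4) by (simp add: kron_scaleR_left kron_scaleR_right a_def b_def)
qed

lemma sum_in_convex_cone_hull:
  "finite I \<Longrightarrow> (\<And>i. i \<in> I \<Longrightarrow> f i \<in> convex_cone hull S) \<Longrightarrow> sum f I \<in> convex_cone hull S"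
  by (induction I rule: finite_induct) (auto intro: convex_cone_hull_contains_0 convex_cone_hull_add)

section \<open>A product basis of the Hermitian matrices\<close>

text \<open>For \<open>z \<in> {1, \<i>}\<close> these are \<open>E\<^sub>i\<^sub>j + E\<^sub>j\<^sub>i\<close> and \<open>\<i> (E\<^sub>i\<^sub>j - E\<^sub>j\<^sub>i)\<close>, which span the
  Hermitian matrices over the reals.\<close>

definition herm_unit :: "'n::finite \<Rightarrow> 'n \<Rightarrow> complex \<Rightarrow> 'n cmat" where
  "herm_unit i j z = (\<chi> x y. z * of_bool (x = i \<and> y = j) + cnj z * of_bool (x = j \<and> y = i))"

lemma hermitian_herm_unit: "hermitian (herm_unit i j z)"
  unfolding hermitian_def
proof (intro allI)
  fix x y
  show "herm_unit i j z $ x $ y = cnj (herm_unit i j z $ y $ x)"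
    by (cases "x = i"; cases "y = j"; cases "x = j"; cases "y = i") (simp_all add: herm_unit_def)
qed

lemma herm_unit_entry_sum_le:
  fixes i j :: "'n::finite"
  assumes "cmod z = 1"
  shows "(\<Sum>x\<in>UNIV. \<Sum>y\<in>UNIV. cmod (herm_unit i j z $ x $ y)) \<le> 2"
proof -
  have "cmod (herm_unit i j z $ x $ y) \<le> of_bool (x = i \<and> y = j) + of_bool (x = j \<and> y = i)" for x y
    using assms norm_triangle_ineq[of z "cnj z"]
    by (cases "x = i"; cases "y = j"; cases "x = j"; cases "y = i") (simp_all add: herm_unit_def)
  then have "(\<Sum>x\<in>UNIV. \<Sum>y\<in>UNIV. cmod (herm_unit i j z $ x $ y))
      \<le> (\<Sum>x\<in>UNIV. \<Sum>y\<in>UNIV. of_bool (x = i \<and> y = j) + of_bool (x = j \<and> y = i))"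
    by (intro sum_mono)
  also have "\<dots> = 2"
    by (simp add: sum.distrib of_bool_conj flip: sum_distrib_left sum_distrib_right)
  finally show ?thesis .
qed

lemma herm_unit_phase_sum:
  "(\<Sum>z\<in>{1, \<i>}. cnj z * herm_unit i j z $ x $ y) = 2 * of_bool (x = i \<and> y = j)"
  by (simp add: herm_unit_def algebra_simps)

lemma kron_herm_unit_expansion:
  fixes D :: "('a::finite \<times> 'b::finite) cmat"
  shows "D $ x $ y = (\<Sum>((p, q), z, w) \<in> UNIV \<times> {1, \<i>} \<times> {1, \<i>}.
           D $ p $ q * cnj z * cnj w / 4 * kron (herm_unit (fst p) (fst q) z) (herm_unit (snd p) (snd q) w) $ x $ y)"
proof -
  have "(\<Sum>((p, q), z, w) \<in> UNIV \<times> {1, \<i>} \<times> {1, \<i>}.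
           D $ p $ q * cnj z * cnj w / 4 * kron (herm_unit (fst p) (fst q) z) (herm_unit (snd p) (snd q) w) $ x $ y)
      = (\<Sum>pq\<in>UNIV. \<Sum>z\<in>{1, \<i>}. \<Sum>w\<in>{1, \<i>}. D $ fst pq $ snd pq / 4 *
           ((cnj z * herm_unit (fst (fst pq)) (fst (snd pq)) z $ fst x $ fst y) *
            (cnj w * herm_unit (snd (fst pq)) (snd (snd pq)) w $ snd x $ snd y)))"
    unfolding sum.cartesian_product[symmetric] by (intro sum.cong refl) (simp add: split_beta kron_nth mult_ac)
  also have "\<dots> = (\<Sum>pq\<in>UNIV. D $ fst pq $ snd pq / 4 *
           ((\<Sum>z\<in>{1, \<i>}. cnj z * herm_unit (fst (fst pq)) (fst (snd pq)) z $ fst x $ fst y) *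
            (\<Sum>w\<in>{1, \<i>}. cnj w * herm_unit (snd (fst pq)) (snd (snd pq)) w $ snd x $ snd y)))"
    unfolding sum_product by (simp only: sum_distrib_left)
  also have "\<dots> = (\<Sum>pq\<in>UNIV. if pq = (x, y) then D $ x $ y else 0)"
    unfolding herm_unit_phase_sum by (intro sum.cong refl) (auto simp: prod_eq_iff)
  finally show ?thesis
    by simp
qed

lemma hermitian_eq_sum_Re_scaleR:
  assumes "hermitian D" "finite I" "\<And>i. i \<in> I \<Longrightarrow> hermitian (K i)"
    and "\<And>x y. D $ x $ y = (\<Sum>i\<in>I. c i * K i $ x $ y)"
  shows "D = (\<Sum>i\<in>I. Re (c i) *\<^sub>R K i)"
proof (intro iffD2[OF vec_eq_iff] allI)
  fix x y
  have "D $ x $ y = cnj (D $ y $ x)"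
    using assms(1) by (rule hermitianD)
  also have "\<dots> = (\<Sum>i\<in>I. cnj (c i) * K i $ x $ y)"
    unfolding assms(4) cnj_sum complex_cnj_mult
    by (intro sum.cong refl) (metis assms(3) hermitianD)
  finally have "2 * D $ x $ y = (\<Sum>i\<in>I. (c i + cnj (c i)) * K i $ x $ y)"
    by (simp add: assms(4) distrib_right sum.distrib)
  also have "\<dots> = 2 * (\<Sum>i\<in>I. of_real (Re (c i)) * K i $ x $ y)"
    by (simp add: complex_add_cnj sum_distrib_left mult.assoc)
  finally show "D $ x $ y = (\<Sum>i\<in>I. Re (c i) *\<^sub>R K i) $ x $ y"
    by (simp add: sum_component scaleR_cmat_nth del: vector_scaleR_component)
qed

definition kron_herm_unit ::
    "(('a::finite \<times> 'b::finite) \<times> ('a \<times> 'b)) \<times> complex \<times> complex \<Rightarrow> ('a \<times> 'b) cmat" where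
  "kron_herm_unit =
     (\<lambda>((p, q), z, w). kron (herm_unit (fst p) (fst q) z) (herm_unit (snd p) (snd q) w))"

lemma hermitian_kron_expansion:
  fixes D :: "('a::finite \<times> 'b::finite) cmat"
  assumes "hermitian D"
  obtains c where "\<And>i. i \<in> UNIV \<times> {1, \<i>} \<times> {1, \<i>} \<Longrightarrow> \<bar>c i\<bar> \<le> norm D"
    and "D = (\<Sum>i \<in> UNIV \<times> {1, \<i>} \<times> {1, \<i>}. c i *\<^sub>R kron_herm_unit i)"
proof -
  define c where "c = (\<lambda>((p, q), z, w). D $ p $ q * cnj z * cnj w / 4)"
  have "\<bar>Re (c i)\<bar> \<le> norm D" if "i \<in> UNIV \<times> {1, \<i>} \<times> {1, \<i>}" for i
  proof -
    obtain p q z w where i: "i = ((p, q), z, w)"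
      by (metis prod.collapse)
    with that have "cmod z = 1" "cmod w = 1"
      by auto
    with i have "\<bar>Re (c i)\<bar> \<le> cmod (D $ p $ q) / 4"
      using abs_Re_le_cmod[of "c i"] by (simp add: c_def norm_mult norm_divide)
    also have "\<dots> \<le> norm D"
      using cmod_nth_nth_le_norm[of D p q] norm_ge_zero[of D] by linarith
    finally show ?thesis .
  qed
  moreover have "D = (\<Sum>i \<in> UNIV \<times> {1, \<i>} \<times> {1, \<i>}. Re (c i) *\<^sub>R kron_herm_unit i)"
  proof (rule hermitian_eq_sum_Re_scaleR[OF assms])
    show "hermitian (kron_herm_unit i)" for i
      by (simp add: kron_herm_unit_def split_beta hermitian_kron hermitian_herm_unit)
    show "D $ x $ y = (\<Sum>i \<in> UNIV \<times> {1, \<i>} \<times> {1, \<i>}. c i * kron_herm_unit i $ x $ y)" for x y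
      unfolding kron_herm_unit_expansion[of D x y] c_def kron_herm_unit_def by (simp add: split_beta)
  qed simp
  ultimately show thesis
    using that[of "\<lambda>i. Re (c i)"] by simp
qed

section \<open>Nonsingular product states are internal\<close>

lemma kron_add_scaleR_kron_in_cone:
  assumes A: "pos_def_with A lA" "0 < lA" and B: "pos_def_with B lB" "0 < lB"
    and hk: "hermitian h" "hermitian k"
    and C: "(\<Sum>i\<in>UNIV. \<Sum>j\<in>UNIV. cmod (h $ i $ j)) \<le> C" "(\<Sum>i\<in>UNIV. \<Sum>j\<in>UNIV. cmod (k $ i $ j)) \<le> C"
      "0 < C"
    and c: "\<bar>c\<bar> * (4 * C\<^sup>2) \<le> lA * lB"
  shows "kron A B + c *\<^sub>R kron h k \<in> convex_cone hull product_states"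
proof -
  define a where "a = lA / (2 * C)"
  define b where "b = c / a"
  have "a > 0"
    using A(2) C(3) by (simp add: a_def)
  have split: "kron A B + c *\<^sub>R kron h k =
      (1 / 2) *\<^sub>R (kron (A + a *\<^sub>R h) (B + b *\<^sub>R k) + kron (A + (- a) *\<^sub>R h) (B + (- b) *\<^sub>R k))"
    using \<open>a > 0\<close> unfolding vec_eq_iff
    by (simp add: kron_def scaleR_cmat_nth b_def algebra_simps del: vector_scaleR_component)
  have "\<bar>b\<bar> * C = \<bar>c\<bar> * (4 * C\<^sup>2) / (2 * lA)"
    using A(2) C(3) by (simp add: b_def a_def abs_divide abs_mult power2_eq_square field_simps)
  also have "\<dots> \<le> lA * lB / (2 * lA)"
    using c A(2) by (intro divide_right_mono) simp_all
  also have "\<dots> = lB / 2"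
    using A(2) by simp
  finally have b_bound: "\<bar>b\<bar> * C \<le> lB / 2" .
  have factor_in_cone: "kron (A + s *\<^sub>R h) (B + t *\<^sub>R k) \<in> convex_cone hull product_states"
    if "\<bar>s\<bar> = a" "\<bar>t\<bar> = \<bar>b\<bar>" for s t
  proof -
    have "\<bar>s\<bar> * (\<Sum>i\<in>UNIV. \<Sum>j\<in>UNIV. cmod (h $ i $ j)) \<le> a * C"
      using that(1) C(1) \<open>a > 0\<close> by (simp add: mult_left_mono)
    then have A': "pos_def_with (A + s *\<^sub>R h) (lA / 2)"
      using C(3) by (intro pos_def_with_add_scaleR[OF A(1) hk(1)]) (simp add: a_def)
    have "\<bar>t\<bar> * (\<Sum>i\<in>UNIV. \<Sum>j\<in>UNIV. cmod (k $ i $ j)) \<le> \<bar>b\<bar> * C"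
      using that(2) C(2) by (simp add: mult_left_mono)
    then have B': "pos_def_with (B + t *\<^sub>R k) (lB / 2)"
      using b_bound by (intro pos_def_with_add_scaleR[OF B(1) hk(2)]) linarith
    show ?thesis
      using A(2) B(2)
      by (intro kron_in_cone pos_def_with_imp_psd[OF A'] pos_def_with_imp_psd[OF B']
          pos_def_with_mtrace_pos[OF A'] pos_def_with_mtrace_pos[OF B']) auto
  qed
  show ?thesis
    unfolding split
    by (intro convex_cone_hull_mul convex_cone_hull_add factor_in_cone) (use \<open>a > 0\<close> in auto)
qed

lemma add_sum_eq_average:
  fixes x :: "'a::real_vector"
  assumes "finite I" "I \<noteq> {}"
  shows "x + sum f I = (\<Sum>i\<in>I. (1 / card I) *\<^sub>R (x + card I *\<^sub>R f i))"
  using assms by (simp add: scaleR_add_right sum.distrib sum_constant_scaleR flip: scaleR_sum_right)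

lemma kron_add_small_hermitian_in_cone:
  fixes A :: "'a::finite cmat" and B :: "'b::finite cmat"
  assumes A: "pos_def_with A lA" "0 < lA" and B: "pos_def_with B lB" "0 < lB"
  obtains e where "0 < e"
    and "\<And>D. hermitian D \<Longrightarrow> norm D < e \<Longrightarrow> kron A B + D \<in> convex_cone hull product_states"
proof -
  define I :: "((('a \<times> 'b) \<times> ('a \<times> 'b)) \<times> complex \<times> complex) set"
    where "I = UNIV \<times> {1, \<i>} \<times> {1, \<i>}"
  define m where "m = real (card I)"
  have "finite I" "I \<noteq> {}" "0 < m"
    by (auto simp: I_def m_def card_gt_0_iff)
  define e where "e = lA * lB / (16 * m)"
  have "kron A B + D \<in> convex_cone hull product_states" if "hermitian D" "norm D < e" for D
  proof -
    obtain c where c: "\<And>i. i \<in> I \<Longrightarrow> \<bar>c i\<bar> \<le> norm D"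
      and expansion: "D = (\<Sum>i\<in>I. c i *\<^sub>R kron_herm_unit i)"
      using hermitian_kron_expansion[OF \<open>hermitian D\<close>] unfolding I_def by blast
    have "kron A B + D = (\<Sum>i\<in>I. (1 / m) *\<^sub>R (kron A B + (m * c i) *\<^sub>R kron_herm_unit i))"
      unfolding expansion add_sum_eq_average[OF \<open>finite I\<close> \<open>I \<noteq> {}\<close>] by (simp add: m_def)
    also have "\<dots> \<in> convex_cone hull product_states"
    proof (intro sum_in_convex_cone_hull convex_cone_hull_mul \<open>finite I\<close>)
      fix i
      assume "i \<in> I"
      then obtain p q z w where i: "i = ((p, q), z, w)" and "cmod z = 1" "cmod w = 1"
        by (auto simp: I_def)
      have "\<bar>m * c i\<bar> * (4 * 2\<^sup>2) = 16 * m * \<bar>c i\<bar>"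
        using \<open>0 < m\<close> by (simp add: abs_mult)
      also have "\<dots> \<le> 16 * m * e"
        using c[OF \<open>i \<in> I\<close>] \<open>norm D < e\<close> \<open>0 < m\<close> by simp
      also have "\<dots> = lA * lB"
        using \<open>0 < m\<close> by (simp add: e_def)
      finally have "\<bar>m * c i\<bar> * (4 * 2\<^sup>2) \<le> lA * lB" .
      then show "kron A B + (m * c i) *\<^sub>R kron_herm_unit i \<in> convex_cone hull product_states"
        unfolding i kron_herm_unit_def prod.case
        by (intro kron_add_scaleR_kron_in_cone[OF A B hermitian_herm_unit hermitian_herm_unit
            herm_unit_entry_sum_le[OF \<open>cmod z = 1\<close>] herm_unit_entry_sum_le[OF \<open>cmod w = 1\<close>]]) simp_all
    qed (use \<open>0 < m\<close> in simp)
    finally show ?thesis .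
  qed
  moreover have "0 < e"
    using A(2) B(2) \<open>0 < m\<close> by (simp add: e_def)
  ultimately show thesis
    using that by blast
qed

lemma kron_density_internal_point:
  fixes rhoA :: "'a::finite cmat" and rhoB :: "'b::finite cmat"
  assumes "density rhoA" "density rhoB" "det rhoA \<noteq> 0" "det rhoB \<noteq> 0"
  shows "internal_point separable_states (kron rhoA rhoB)"
proof -
  obtain lA where lA: "pos_def_with rhoA lA" "0 < lA"
    using assms(1,3) psd_nonsingular_imp_pos_def_with by (metis density_def)
  obtain lB where lB: "pos_def_with rhoB lB" "0 < lB"
    using assms(2,4) psd_nonsingular_imp_pos_def_with by (metis density_def)
  obtain e where "0 < e"
    and cone: "\<And>D. hermitian D \<Longrightarrow> norm D < e \<Longrightarrow> kron rhoA rhoB + D \<in> convex_cone hull product_states"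
    using kron_add_small_hermitian_in_cone[OF lA lB] by blast
  have "hermitian (kron rhoA rhoB)"
    using assms(1,2) by (simp add: density_def psd_def hermitian_kron)
  have "X \<in> separable_states" if X: "X \<in> ball (kron rhoA rhoB) e \<inter> trace_one_herm" for X
  proof -
    have "hermitian (X - kron rhoA rhoB)" "norm (X - kron rhoA rhoB) < e"
      using X \<open>hermitian (kron rhoA rhoB)\<close>
      by (auto simp: trace_one_herm_def hermitian_diff dist_norm norm_minus_commute)
    then have "X \<in> convex_cone hull product_states"
      using cone[of "X - kron rhoA rhoB"] by simp
    then show ?thesis
      using X by (intro separable_if_in_cone) (auto simp: trace_one_herm_def)
  qed
  with \<open>0 < e\<close> show ?thesis
    unfolding internal_point_def by blast
qed

section \<open>Singular product states lie on the boundary\<close>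

definition prod_vec :: "complex ^ 'a \<Rightarrow> complex ^ 'b \<Rightarrow> complex ^ ('a \<times> 'b)" where
  "prod_vec v w = (\<chi> p. v $ fst p * w $ snd p)"

lemma prod_vec_nonzero: "v \<noteq> 0 \<Longrightarrow> w \<noteq> 0 \<Longrightarrow> prod_vec v w \<noteq> 0"
  by (auto simp: vec_eq_iff prod_vec_def)

lemma quad_form_kron_prod_vec:
  fixes A :: "'a::finite cmat" and B :: "'b::finite cmat"
  shows "quad_form (kron A B) (prod_vec v w) = quad_form A v * quad_form B w"
  unfolding quad_form_def sum_UNIV_prod sum_product
  by (intro sum.cong refl) (simp add: kron_def prod_vec_def mult_ac)

lemma separable_quad_form_prod_vec_nonneg:
  assumes "X \<in> separable_states"
  shows "0 \<le> Re (quad_form X (prod_vec v w))"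
proof -
  have "convex {X :: ('a \<times> 'b) cmat. 0 \<le> Re (quad_form X (prod_vec v w))}"
    by (rule convexI) (simp add: quad_form_add quad_form_scaleR)
  moreover have "product_states \<subseteq> {X. 0 \<le> Re (quad_form X (prod_vec v w))}"
  proof clarify
    fix X :: "('a \<times> 'b) cmat"
    assume "X \<in> product_states"
    then obtain sA sB where X: "X = kron sA sB" and "psd sA" "psd sB"
      by (auto simp: product_states_def density_def)
    then have "quad_form sA v \<in> \<real>" "quad_form sB w \<in> \<real>"
      "0 \<le> Re (quad_form sA v)" "0 \<le> Re (quad_form sB w)"
      by (simp_all add: psd_def)
    then show "0 \<le> Re (quad_form X (prod_vec v w))"
      unfolding X quad_form_kron_prod_vec by (simp add: complex_is_Real_iff)
  qed
  ultimately have "separable_states \<subseteq> {X :: ('a \<times> 'b) cmat. 0 \<le> Re (quad_form X (prod_vec v w))}"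
    unfolding separable_states_eq_convex_hull by (rule hull_minimal[rotated])
  with assms show ?thesis
    by blast
qed

lemma singular_imp_quad_form_null:
  fixes M :: "'n::finite cmat"
  assumes "det M = 0"
  obtains v where "v \<noteq> 0" "quad_form M v = 0"
proof -
  obtain v where "v \<noteq> 0" "M *v v = 0"
    using assms invertible_det_nz[of M] invertible_left_inverse[of M] matrix_left_invertible_ker[of M]
    by blast
  then show thesis
    using that by (simp add: quad_form_eq_sum_mult_vec)
qed

lemma kron_singular_null_prod_vec:
  fixes A :: "'a::finite cmat" and B :: "'b::finite cmat"
  assumes "det A * det B = 0"
  obtains v w where "prod_vec v w \<noteq> 0" "quad_form (kron A B) (prod_vec v w) = 0"
proof -
  have axis_nonzero: "axis i (1::complex) \<noteq> 0" for i :: "'c::finite"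
    by (simp add: axis_eq_0_iff)
  from assms consider "det A = 0" | "det B = 0"
    by auto
  then show thesis
  proof cases
    case 1
    then obtain v where "v \<noteq> 0" "quad_form A v = 0"
      by (rule singular_imp_quad_form_null)
    show thesis
    proof (rule that)
      show "prod_vec v (axis undefined 1) \<noteq> 0"
        by (rule prod_vec_nonzero[OF \<open>v \<noteq> 0\<close> axis_nonzero])
    qed (simp add: quad_form_kron_prod_vec \<open>quad_form A v = 0\<close>)
  next
    case 2
    then obtain w where "w \<noteq> 0" "quad_form B w = 0"
      by (rule singular_imp_quad_form_null)
    show thesis
    proof (rule that)
      show "prod_vec (axis undefined 1) w \<noteq> 0"
        by (rule prod_vec_nonzero[OF axis_nonzero \<open>w \<noteq> 0\<close>])
    qed (simp add: quad_form_kron_prod_vec \<open>quad_form B w = 0\<close>)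
  qed
qed

lemma traceless_hermitian_with_negative_quad_form:
  fixes u :: "complex ^ 'n::finite"
  assumes "CARD('n) \<ge> 2" "u \<noteq> 0"
  obtains D :: "'n cmat" where "hermitian D" "mtrace D = 0" "Re (quad_form D u) < 0"
proof -
  define s where "s = (norm u)\<^sup>2"
  define N where "N = real CARD('n)"
  define P :: "'n cmat" where "P = (\<chi> p q. u $ p * cnj (u $ q))"
  define D where "D = s *\<^sub>R mat 1 + (- N) *\<^sub>R P"
  have "hermitian (mat 1 :: 'n cmat)" "hermitian P"
    by (simp_all add: hermitian_def mat_def P_def mult.commute)
  then have "hermitian D"
    unfolding D_def by (intro hermitian_add hermitian_scaleR)
  have "mtrace (mat 1 :: 'n cmat) = of_real N"
    by (simp add: mtrace_def mat_def N_def)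
  moreover have "mtrace P = of_real s"
    unfolding mtrace_def P_def s_def sum_cnj_mult_self[symmetric] by (simp add: mult.commute)
  ultimately have "mtrace D = 0"
    unfolding D_def mtrace_add mtrace_scaleR by simp
  have "quad_form (mat 1) u = of_real s"
    unfolding quad_form_eq_sum_mult_vec matrix_vector_mul_lid sum_cnj_mult_self s_def ..
  moreover have "quad_form P u = (\<Sum>i\<in>UNIV. cnj (u $ i) * u $ i) * (\<Sum>j\<in>UNIV. cnj (u $ j) * u $ j)"
    unfolding quad_form_def P_def sum_product by (simp add: mult_ac)
  then have "quad_form P u = of_real (s\<^sup>2)"
    by (simp add: sum_cnj_mult_self s_def power2_eq_square)
  ultimately have "Re (quad_form D u) = (1 - N) * s\<^sup>2"
    unfolding D_def quad_form_add quad_form_scaleR by (simp add: power2_eq_square algebra_simps)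
  also have "\<dots> < 0"
    using assms by (intro mult_neg_pos) (simp_all add: s_def N_def)
  finally show thesis
    using that \<open>hermitian D\<close> \<open>mtrace D = 0\<close> by blast
qed

lemma not_internal_point_if_supporting:
  fixes rho :: "'n::finite cmat"
  assumes "CARD('n) \<ge> 2" "u \<noteq> 0" "quad_form rho u = 0" "rho \<in> trace_one_herm"
    and "\<And>Y. Y \<in> S \<Longrightarrow> 0 \<le> Re (quad_form Y u)"
  shows "\<not> internal_point S rho"
proof
  assume "internal_point S rho"
  then obtain e where "e > 0" and e: "ball rho e \<inter> trace_one_herm \<subseteq> S"
    unfolding internal_point_def by blast
  obtain D where D: "hermitian D" "mtrace D = 0" "Re (quad_form D u) < 0"
    using traceless_hermitian_with_negative_quad_form[OF assms(1,2)] by blast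
  then have "D \<noteq> 0"
    by (auto simp: quad_form_def)
  define t where "t = e / (2 * norm D)"
  have "t > 0" "norm (t *\<^sub>R D) < e"
    using \<open>e > 0\<close> \<open>D \<noteq> 0\<close> by (simp_all add: t_def)
  then have "rho + t *\<^sub>R D \<in> S"
    using e assms(4) D
    by (auto simp: dist_norm trace_one_herm_def hermitian_add hermitian_scaleR mtrace_add mtrace_scaleR)
  then have "0 \<le> Re (quad_form (rho + t *\<^sub>R D) u)"
    by (rule assms(5))
  moreover have "Re (quad_form (rho + t *\<^sub>R D) u) = t * Re (quad_form D u)"
    by (simp add: quad_form_add quad_form_scaleR assms(3))
  moreover have "t * Re (quad_form D u) < 0"
    using \<open>t > 0\<close> D(3) by (rule mult_pos_neg)
  ultimately show False
    by linarith
qed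

theorem mainTheorem1:
  fixes rhoA :: "'a::finite cmat" and rhoB :: "'b::finite cmat"
  assumes "CARD('a) \<ge> 2" and "CARD('b) \<ge> 2"
    and "density rhoA" and "density rhoB"
  shows "kron rhoA rhoB \<in> aff_boundary (separable_states :: ('a \<times> 'b) cmat set)
         \<longleftrightarrow> det rhoA * det rhoB = 0"
proof -
  have separable: "kron rhoA rhoB \<in> (separable_states :: ('a \<times> 'b) cmat set)"
    using assms(3,4) by (auto simp: separable_states_eq_convex_hull product_states_def intro: hull_inc)
  have trace_one: "kron rhoA rhoB \<in> trace_one_herm"
    using assms(3,4) by (simp add: trace_one_herm_def density_def psd_def hermitian_kron mtrace_kron)
  have "CARD('a) \<le> CARD('a \<times> 'b)"
    by (simp add: card_prod)
  then have "CARD('a \<times> 'b) \<ge> 2"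
    using assms(1) by linarith
  have "\<not> internal_point separable_states (kron rhoA rhoB) \<longleftrightarrow> det rhoA * det rhoB = 0"
  proof
    assume "det rhoA * det rhoB = 0"
    then obtain v w where "prod_vec v w \<noteq> 0" "quad_form (kron rhoA rhoB) (prod_vec v w) = 0"
      by (rule kron_singular_null_prod_vec)
    then show "\<not> internal_point separable_states (kron rhoA rhoB)"
      using \<open>CARD('a \<times> 'b) \<ge> 2\<close> trace_one separable_quad_form_prod_vec_nonneg
      by (intro not_internal_point_if_supporting) auto
  qed (use kron_density_internal_point assms(3,4) in auto)
  with separable show ?thesis
    by (simp add: aff_boundary_def)
qed

end
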